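(* For integers $m\ge1$ and $1\le j\le m-1$, $$d_{j+1,m}=\frac{2m+1}{j+1}\,d_{j,m}-\frac{(m+j)(m+1-j)}{j(j+1)}\,d_{j-1,m}.$$ Also $d_{m,m}=2^{-m}\binom{2m}{m}$ and $d_{m-1,m}=(2m+1)2^{-(m+1)}\binom{2m}{m}$.
   Context: $d_{l,m}=2^{-2m}\sum_{k=l}^{m}2^{k}\binom{2m-2k}{m-k}\binom{m+k}{m}\binom{k}{l}$ for $0\le l\le m$. *)

theory Defs
  imports Complex_Main
begin

definition d :: "nat \<Rightarrow> nat \<Rightarrow> real" where
  "d l m = (1 / 2 ^ (2 * m)) *
     (\<Sum>k = l..m. 2 ^ k * real ((2*m - 2*k) choose (m - k)) * real ((m + k) choose m) * real (k choose l))"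

end

theory Submission
  imports Defs
begin

(* The numbers d l m are, up to the factor 2^(2m), the binomial moments
     S l = (SUM k <= m. T k * (k choose l)),  T k = 2^k * C(2m-2k, m-k) * C(m+k, m),
   of the weight sequence T.  The recurrence is proved by Zeilberger's method:
   T has the hypergeometric term ratio
     T (k+1) * (2(m-k)-1) * (k+1) = T k * (m-k) * (m+k+1),
   and for ANY sequence with this ratio the three-term combination
     j(j+1) S(j+1) - (2m+1) j S j + (m+j)(m+1-j) S(j-1)
   telescopes to zero, with certificate G k = (2m+1-2k) * T k * j * C(k,j).  The closed forms for
   d m m and d (m-1) m follow from S m = T m, S (m+1) = 0 and the recurrence at j = m. *)

lemma real_choose_lower_step:
  "real (Suc i) * real (k choose Suc i) = (real k - real i) * real (k choose i)"
proof (cases "i \<le> k")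
  case True
  have "Suc i * (k choose Suc i) = (k - i) * (k choose i)"
  proof (cases "i < k")
    case True
    then obtain b where "k = Suc (i + b)" by (metis add_Suc_right less_imp_Suc_add)
    then show ?thesis using Suc_times_binomial_add[of i b] by simp
  qed (use True in simp)
  then have "real (Suc i * (k choose Suc i)) = real ((k - i) * (k choose i))" by simp
  then show ?thesis using True by (simp add: of_nat_diff algebra_simps)
qed (simp add: binomial_eq_0)

lemma central_binomial_step:
  assumes "n \<ge> 1"
  shows "real ((2*n) choose n) * real n = 2 * (2 * real n - 1) * real ((2*n - 2) choose (n - 1))"
proof -
  obtain p where n: "n = Suc p" using assms by (cases n) auto
  have e1: "Suc (Suc (2*p)) * (Suc (2*p) choose p) = (Suc (Suc (2*p)) choose Suc p) * Suc p"
    by (rule Suc_times_binomial_eq)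
  have e2: "Suc (2*p) * (2*p choose p) = (Suc (2*p) choose Suc p) * Suc p"
    by (rule Suc_times_binomial_eq)
  have e3: "(Suc (2*p) choose Suc p) = (Suc (2*p) choose p)"
    using binomial_symmetric[of "Suc p" "Suc (2*p)"] by simp
  have "(Suc (Suc (2*p)) choose Suc p) * Suc p * Suc p
      = Suc p * (2 * (Suc (2*p) * (2*p choose p)))"
    using e1 e2 e3 by (metis mult.assoc mult.commute mult_2 add_Suc_shift add_Suc)
  then have "(Suc (Suc (2*p)) choose Suc p) * Suc p = 2 * (Suc (2*p) * (2*p choose p))"
    by (simp del: binomial_Suc_Suc mult_Suc mult_Suc_right add: mult.commute)
  then have "real ((Suc (Suc (2*p)) choose Suc p) * Suc p) = real (2 * (Suc (2*p) * (2*p choose p)))"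
    by (simp only:)
  then show ?thesis unfolding n by (simp del: binomial_Suc_Suc add: algebra_simps)
qed

lemma upper_binomial_step:
  "real ((m + k + 1) choose m) * (real k + 1) = (real m + real k + 1) * real ((m + k) choose m)"
proof -
  have "Suc (m+k) * ((m+k) choose k) = (Suc (m+k) choose Suc k) * Suc k"
    by (rule Suc_times_binomial_eq)
  moreover have "(m+k) choose k = (m+k) choose m"
    using binomial_symmetric[of k "m+k"] by simp
  moreover have "Suc (m+k) choose Suc k = (m + k + 1) choose m"
    using binomial_symmetric[of "Suc k" "Suc (m+k)"] by simp
  ultimately have "real (Suc (m+k) * ((m+k) choose m)) = real (((m + k + 1) choose m) * Suc k)"
    by simp
  then show ?thesis by (simp add: algebra_simps)
qed

text \<open>Expressing the three binomial coefficients C(k,j+1), C(k,j), C(k,j-1) of the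
  recurrence through C(k,j-1), which turns the summand into a polynomial multiple of it.\<close>
lemma choose_via_predecessor:
  assumes "j \<ge> 1"
  shows "real j * real (k choose j) = (real k - real j + 1) * real (k choose (j - 1))"
    and "real j * (real j + 1) * real (k choose (j + 1))
           = (real k - real j) * (real k - real j + 1) * real (k choose (j - 1))"
proof -
  show j: "real j * real (k choose j) = (real k - real j + 1) * real (k choose (j - 1))"
    using real_choose_lower_step[of "j - 1" k] assms by (simp add: of_nat_diff)
  have "(real j + 1) * real (k choose (j + 1)) = (real k - real j) * real (k choose j)"
    using real_choose_lower_step[of j k] by (simp add: add.commute)
  then show "real j * (real j + 1) * real (k choose (j + 1))
           = (real k - real j) * (real k - real j + 1) * real (k choose (j - 1))"
    by (metis j mult.assoc mult.left_commute)
qed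

lemma binomial_moment_recurrence:
  fixes T :: "nat \<Rightarrow> real"
  assumes ratio: "\<And>k. k < m \<Longrightarrow>
      T (Suc k) * (2 * (real m - real k) - 1) * (real k + 1) = T k * (real m - real k) * (real m + real k + 1)"
    and j1: "j \<ge> 1"
  defines "S \<equiv> \<lambda>l. \<Sum>k\<le>m. T k * real (k choose l)"
  shows "real j * (real j + 1) * S (j + 1) - (2 * real m + 1) * real j * S j
           + (real m + real j) * (real m + 1 - real j) * S (j - 1) = 0"
proof -
  define F where "F k = T k * (real j * (real j + 1) * real (k choose (j+1))
       - (2 * real m + 1) * real j * real (k choose j)
       + (real m + real j) * (real m + 1 - real j) * real (k choose (j - 1)))" for k
  define G where "G k = (2 * real m + 1 - 2 * real k) * T k * (real j * real (k choose j))" for k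
  note pred = choose_via_predecessor[OF j1]
  have F_poly: "F k = T k * real (k choose (j - 1)) * ((real k - real j) * (real k - real j + 1)
      - (2 * real m + 1) * (real k - real j + 1) + (real m + real j) * (real m + 1 - real j))" for k
    unfolding F_def mult.assoc[of "2 * real m + 1"] pred by (simp add: algebra_simps)
  have G_poly: "G k = T k * real (k choose (j - 1)) * (2 * real m + 1 - 2 * real k) * (real k - real j + 1)" for k
    unfolding G_def pred by (simp add: algebra_simps)
  have telescope: "F k = G (Suc k) - G k" if "k < m" for k
  proof -
    have "real j * real (Suc k choose j) = (real k + 1) * real (k choose (j - 1))"
      using pred(1)[of k] pred(1)[of "Suc k"] binomial_Suc_Suc[of k "j - 1"] j1
      by (simp add: algebra_simps)
    then have "G (Suc k) = (T (Suc k) * (2 * (real m - real k) - 1) * (real k + 1)) * real (k choose (j - 1))"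
      unfolding G_def by (simp add: algebra_simps)
    also have "\<dots> = T k * (real m - real k) * (real m + real k + 1) * real (k choose (j - 1))"
      using ratio[OF that] by simp
    finally show ?thesis unfolding F_poly G_poly by (simp add: algebra_simps)
  qed
  have "(\<Sum>k\<le>m. F k) = (\<Sum>k<m. G (Suc k) - G k) + F m"
    using telescope by (simp add: sum.atMost_Suc lessThan_Suc_atMost[symmetric])
  also have "\<dots> = 0"
  proof -
    have "G 0 = 0" unfolding G_def using j1 by simp
    moreover have "F m = - G m" unfolding F_poly G_poly by (simp add: algebra_simps)
    ultimately show ?thesis unfolding sum_lessThan_telescope by simp
  qed
  finally show ?thesis
    unfolding F_def S_def by (simp add: sum.distrib sum_subtractf sum_distrib_left algebra_simps)
qed

definition d_weight :: "nat \<Rightarrow> nat \<Rightarrow> real" where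
  "d_weight m k = 2 ^ k * real ((2*m - 2*k) choose (m - k)) * real ((m + k) choose m)"

text \<open>d l m is 2^(-2m) times the l-th binomial moment of the weights; terms k < l vanish.\<close>
lemma d_as_moment: "d l m = (\<Sum>k\<le>m. d_weight m k * real (k choose l)) / 2 ^ (2*m)"
proof -
  have "(\<Sum>k = l..m. d_weight m k * real (k choose l)) = (\<Sum>k\<le>m. d_weight m k * real (k choose l))"
    by (rule sum.mono_neutral_left) (auto simp: binomial_eq_0)
  then show ?thesis unfolding d_def d_weight_def by simp
qed

lemma d_weight_ratio:
  assumes "k < m"
  shows "d_weight m (Suc k) * (2 * (real m - real k) - 1) * (real k + 1)
       = d_weight m k * (real m - real k) * (real m + real k + 1)"
proof -
  define n where "n = m - k"
  have n1: "n \<ge> 1" and rn: "real n = real m - real k" using assms unfolding n_def by auto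
  have idx: "2*m - 2*Suc k = 2*n - 2" "m - Suc k = n - 1" "2*m - 2*k = 2*n" "m - k = n"
    unfolding n_def by auto
  have "d_weight m (Suc k) * (2 * (real m - real k) - 1) * (real k + 1)
      = 2^k * (2 * (2 * real n - 1) * real ((2*n - 2) choose (n - 1)))
          * (real ((m + k + 1) choose m) * (real k + 1))"
    unfolding d_weight_def idx rn[symmetric] by (simp add: algebra_simps)
  also have "\<dots> = 2^k * (real ((2*n) choose n) * real n) * ((real m + real k + 1) * real ((m + k) choose m))"
    using central_binomial_step[OF n1] upper_binomial_step by simp
  also have "\<dots> = d_weight m k * (real m - real k) * (real m + real k + 1)"
    unfolding d_weight_def idx rn[symmetric] by (simp add: algebra_simps)
  finally show ?thesis .
qed

lemma d_recurrence_cleared: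
  assumes "j \<ge> 1"
  shows "real j * (real j + 1) * d (j + 1) m - (2 * real m + 1) * real j * d j m
           + (real m + real j) * (real m + 1 - real j) * d (j - 1) m = 0"
proof -
  define S where "S l = (\<Sum>k\<le>m. d_weight m k * real (k choose l))" for l
  have "real j * (real j + 1) * d (j + 1) m - (2 * real m + 1) * real j * d j m
           + (real m + real j) * (real m + 1 - real j) * d (j - 1) m
      = (real j * (real j + 1) * S (j + 1) - (2 * real m + 1) * real j * S j
           + (real m + real j) * (real m + 1 - real j) * S (j - 1)) / 2 ^ (2*m)"
    unfolding d_as_moment S_def by (simp add: diff_divide_distrib add_divide_distrib)
  also have "\<dots> = 0"
    using binomial_moment_recurrence[of m "d_weight m", OF d_weight_ratio assms] unfolding S_def by simp
  finally show ?thesis .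
qed

lemma d_recurrence:
  assumes "j \<ge> 1"
  shows "d (j + 1) m = (2 * real m + 1) / (real j + 1) * d j m
           - (real m + real j) * (real m + 1 - real j) / (real j * (real j + 1)) * d (j - 1) m"
proof -
  let ?X = "(real m + real j) * (real m + 1 - real j)"
  have jj: "real j * (real j + 1) \<noteq> 0" using assms by simp
  have "real j * (real j + 1) * d (j + 1) m = (2 * real m + 1) * real j * d j m - ?X * d (j - 1) m"
    using d_recurrence_cleared[of j m, OF assms] by simp
  then have "d (j + 1) m = ((2 * real m + 1) * real j * d j m - ?X * d (j - 1) m) / (real j * (real j + 1))"
    using jj by (simp add: eq_divide_eq mult.commute)
  also have "\<dots> = (2 * real m + 1) / (real j + 1) * d j m - ?X / (real j * (real j + 1)) * d (j - 1) m"
    using assms by (simp add: diff_divide_distrib)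
  finally show ?thesis .
qed

text \<open>Only k = m contributes to d m m, and no term contributes to d (m+1) m.\<close>
lemma d_diagonal: "d m m = real ((2 * m) choose m) / 2 ^ m"
proof -
  have "(\<Sum>k\<le>m. d_weight m k * real (k choose m)) = (\<Sum>k\<in>{m}. d_weight m k * real (k choose m))"
    by (rule sum.mono_neutral_right) (auto simp: binomial_eq_0)
  then show ?thesis
    unfolding d_as_moment d_weight_def by (simp add: mult_2 power_add)
qed

lemma d_beyond_diagonal: "d (m + 1) m = 0"
  unfolding d_as_moment by (simp add: binomial_eq_0)

text \<open>The recurrence at j = m, where d (m+1) m vanishes, determines d (m-1) m.\<close>
lemma d_subdiagonal:
  assumes "m \<ge> 1"
  shows "d (m - 1) m = (2 * real m + 1) * real ((2 * m) choose m) / 2 ^ (m + 1)"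
proof -
  have "real m * (2 * d (m - 1) m) = real m * ((2 * real m + 1) * d m m)"
    using d_recurrence_cleared[OF assms, of m] d_beyond_diagonal by (simp add: algebra_simps)
  then have "d (m - 1) m = (2 * real m + 1) / 2 * d m m" using assms by simp
  then show ?thesis unfolding d_diagonal by simp
qed

theorem mainTheorem14:
  fixes m :: nat
  assumes "m \<ge> 1"
  shows "(\<forall>j::nat. 1 \<le> j \<and> j \<le> m - 1 \<longrightarrow>
            d (j + 1) m = (2 * real m + 1) / (real j + 1) * d j m
              - (real m + real j) * (real m + 1 - real j) / (real j * (real j + 1)) * d (j - 1) m)
       \<and> d m m = real ((2 * m) choose m) / 2 ^ m
       \<and> d (m - 1) m = (2 * real m + 1) * real ((2 * m) choose m) / 2 ^ (m + 1)"
  using d_recurrence d_diagonal d_subdiagonal[OF assms] by blast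

end
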